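(* Let $q\in\mathscr{P}_2(\mathbb{R}^d)$ not give mass to small sets, and let $\psi:\mathbb{R}^d\to(-\infty,+\infty]$ be a proper convex function. Then \[ \sup_{p\in\mathscr{P}_2(\mathbb{R}^d)}\Big(\mathrm{MCov}(p,q)-\int\psi\,dp\Big)=\int\psi^\ast\,dq. \]
   Context: $\mathscr{P}_2(\mathbb{R}^d)$: Borel probability measures with finite second moment. $q$ does not give mass to small sets: $q(A)=0$ for measurable $A$ of Hausdorff dimension $\le d-1$. $\mathrm{MCov}(p,q)\coloneqq\sup_{\tilde\pi\in\mathsf{Cpl}(p,q)}\int\langle y,z\rangle\,d\tilde\pi$ over couplings. A proper convex function is a convex $\psi$ with $\operatorname{dom}\psi=\{\psi<+\infty\}\neq\varnothing$. $\psi^\ast(x)\coloneqq\sup_y(\langle x,y\rangle-\psi(y))$. *)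

theory Defs
  imports "HOL-Probability.Probability"
begin

definition P2 :: "'a::euclidean_space measure set" where
  "P2 = {p. prob_space p \<and> sets p = sets borel \<and>
            (\<integral>\<^sup>+ x. ennreal ((norm x)\<^sup>2) \<partial>p) < \<infinity>}"

definition Cpl :: "'a::euclidean_space measure \<Rightarrow> 'a measure \<Rightarrow> ('a \<times> 'a) measure set" where
  "Cpl p q = {\<pi>. prob_space \<pi> \<and> sets \<pi> = sets (borel \<Otimes>\<^sub>M borel) \<and>
                 distr \<pi> borel fst = p \<and> distr \<pi> borel snd = q}"

definition MCov :: "'a::euclidean_space measure \<Rightarrow> 'a measure \<Rightarrow> ereal" where
  "MCov p q = (SUP \<pi>\<in>Cpl p q. ereal (\<integral> yz. fst yz \<bullet> snd yz \<partial>\<pi>))"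

definition ext_integral :: "'a measure \<Rightarrow> ('a \<Rightarrow> ereal) \<Rightarrow> ereal" where
  "ext_integral M f =
     enn2ereal (\<integral>\<^sup>+ x. e2ennreal (f x) \<partial>M) - enn2ereal (\<integral>\<^sup>+ x. e2ennreal (- f x) \<partial>M)"

definition proper_convex :: "('a::euclidean_space \<Rightarrow> ereal) \<Rightarrow> bool" where
  "proper_convex \<psi> \<longleftrightarrow>
     (\<forall>x. \<psi> x \<noteq> -\<infinity>) \<and> (\<exists>x. \<psi> x < \<infinity>) \<and>
     (\<forall>x y t. 0 < t \<and> t < 1 \<longrightarrow>
        \<psi> (t *\<^sub>R x + (1 - t) *\<^sub>R y) \<le> ereal t * \<psi> x + ereal (1 - t) * \<psi> y)"

definition conjugate :: "('a::euclidean_space \<Rightarrow> ereal) \<Rightarrow> 'a \<Rightarrow> ereal" where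
  "conjugate \<psi> x = (SUP y. ereal (x \<bullet> y) - \<psi> y)"

definition hausdorff_content :: "real \<Rightarrow> real \<Rightarrow> 'a::euclidean_space set \<Rightarrow> ennreal" where
  "hausdorff_content s \<delta> A =
     (INF C\<in>{C :: nat \<Rightarrow> 'a set. A \<subseteq> (\<Union>n. C n) \<and> (\<forall>n. diameter (C n) \<le> \<delta>)}.
        (\<Sum>n. ennreal (diameter (C n) powr s)))"

definition hausdorff_measure :: "real \<Rightarrow> 'a::euclidean_space set \<Rightarrow> ennreal" where
  "hausdorff_measure s A = (SUP \<delta>\<in>{0<..}. hausdorff_content s \<delta> A)"

text \<open>Hausdorff dimension: inf of s > 0 with H^s(A) = 0 (equal to the usual inf over s \<ge> 0).\<close>
definition hausdorff_dim :: "'a::euclidean_space set \<Rightarrow> ereal" where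
  "hausdorff_dim A = Inf (ereal ` {s. 0 < s \<and> hausdorff_measure s A = 0})"

definition no_mass_small_sets :: "'a::euclidean_space measure \<Rightarrow> bool" where
  "no_mass_small_sets q \<longleftrightarrow>
     (\<forall>A\<in>sets q. hausdorff_dim A \<le> ereal (real DIM('a) - 1) \<longrightarrow> emeasure q A = 0)"

end

theory Submission
  imports Defs
begin

text \<open>
  Integrating the Fenchel--Young inequality \<open>\<langle>y, z\<rangle> \<le> \<psi>**(y) + \<psi>*(z)\<close> against any
  coupling of \<open>p\<close> and \<open>q\<close> gives \<open>MCov(p, q) \<le> \<integral>\<psi>** dp + \<integral>\<psi>* dq\<close>, and
  \<open>\<psi>** \<le> \<psi>\<close>. The biconjugate is integrated instead of \<open>\<psi>\<close> because it is Borel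
  measurable while \<open>\<psi>\<close> need not be.

  Conversely, \<open>\<psi>*\<close> is the supremum of countably many affine functions
  \<open>z \<mapsto> \<langle>z, y\<^sub>k\<rangle> - \<psi>(y\<^sub>k)\<close>, with the points \<open>(y\<^sub>k, \<psi>(y\<^sub>k))\<close> dense in the graph
  of \<open>\<psi>\<close>. If \<open>T\<^sub>n(z)\<close> is a measurably chosen maximiser \<open>y\<^sub>k\<close>, \<open>k \<le> n\<close>, then
  \<open>p\<^sub>n = T\<^sub>n # q\<close> is finitely supported and the coupling \<open>(T\<^sub>n, id) # q\<close> attains
  equality in Fenchel--Young, so the integral of the \<open>n\<close>-th maximum is at most
  \<open>MCov(p\<^sub>n, q) - \<integral>\<psi> dp\<^sub>n\<close>; monotone convergence finishes the proof.
\<close>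

section \<open>Integrals of extended-real functions\<close>

lemma enn2ereal_eq_ereal_enn2real: "x < \<infinity> \<Longrightarrow> enn2ereal x = ereal (enn2real x)"
  by (metis ennreal_enn2real enn2ereal_ennreal enn2real_nonneg infinity_ennreal_def less_top)

lemma ext_integral_eq_integral:
  fixes v :: "'b \<Rightarrow> real"
  assumes "AE x in M. f x = ereal (v x)" and "integrable M v"
  shows "ext_integral M f = ereal (\<integral>x. v x \<partial>M)"
proof -
  have pos: "(\<integral>\<^sup>+ x. e2ennreal (f x) \<partial>M) = (\<integral>\<^sup>+ x. ennreal (v x) \<partial>M)"
   and neg: "(\<integral>\<^sup>+ x. e2ennreal (- f x) \<partial>M) = (\<integral>\<^sup>+ x. ennreal (- v x) \<partial>M)"
    by (auto intro!: nn_integral_cong_AE eventually_mono[OF assms(1)])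
  have "(\<integral>\<^sup>+ x. ennreal (norm (v x)) \<partial>M) < \<infinity>"
    using assms(2) by (simp add: integrable_iff_bounded)
  then have "(\<integral>\<^sup>+ x. ennreal (v x) \<partial>M) < \<infinity>" "(\<integral>\<^sup>+ x. ennreal (- v x) \<partial>M) < \<infinity>"
    by (auto elim!: le_less_trans[rotated] intro!: nn_integral_mono ennreal_leI)
  then show ?thesis
    unfolding ext_integral_def pos neg real_lebesgue_integral_def[OF assms(2)]
    by (simp add: enn2ereal_eq_ereal_enn2real)
qed

lemma ext_integral_mono:
  assumes "\<And>x. f x \<le> g x"
  shows "ext_integral M f \<le> ext_integral M g"
  unfolding ext_integral_def
  by (intro ereal_minus_mono) (auto simp: less_eq_ennreal.rep_eq[symmetric] assms e2ennreal_mono intro!: nn_integral_mono)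

lemma e2ennreal_diff_add_parts:
  fixes r :: real and u :: ereal
  assumes "ereal r \<le> u"
  shows "e2ennreal (u - ereal r) + ennreal r + e2ennreal (- u) = e2ennreal u + ennreal (- r)"
proof (cases u)
  case (real s)
  with assms show ?thesis
    by (cases "0 \<le> r"; cases "0 \<le> s") (auto simp: ennreal_neg ennreal_plus[symmetric] simp del: ennreal_plus)
qed (use assms in auto)

lemma ext_integral_eq_integral_add_nn_integral:
  fixes a :: "'b \<Rightarrow> real"
  assumes f[measurable]: "f \<in> borel_measurable M" and a: "integrable M a"
    and le: "\<And>x. ereal (a x) \<le> f x"
  shows "ext_integral M f = ereal (\<integral>x. a x \<partial>M) + enn2ereal (\<integral>\<^sup>+ x. e2ennreal (f x - ereal (a x)) \<partial>M)"
proof -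
  have [measurable]: "a \<in> borel_measurable M" using a by auto
  define X where "X = (\<integral>\<^sup>+ x. e2ennreal (f x - ereal (a x)) \<partial>M)"
  define Fp where "Fp = (\<integral>\<^sup>+ x. e2ennreal (f x) \<partial>M)"
  define Fn where "Fn = (\<integral>\<^sup>+ x. e2ennreal (- f x) \<partial>M)"
  define Ap where "Ap = (\<integral>\<^sup>+ x. ennreal (a x) \<partial>M)"
  define An where "An = (\<integral>\<^sup>+ x. ennreal (- a x) \<partial>M)"
  have "(\<integral>\<^sup>+ x. ennreal (norm (a x)) \<partial>M) < \<infinity>"
    using a by (simp add: integrable_iff_bounded)
  then have Ap_fin: "Ap < \<infinity>" and An_fin: "An < \<infinity>"
    unfolding Ap_def An_def by (auto elim!: le_less_trans[rotated] intro!: nn_integral_mono ennreal_leI)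
  have "Fn \<le> An"
    unfolding Fn_def An_def
  proof (intro nn_integral_mono)
    fix x
    have "- f x \<le> ereal (- a x)" using le[of x] by (metis ereal_minus_le_minus uminus_ereal.simps(1))
    then show "e2ennreal (- f x) \<le> ennreal (- a x)" using e2ennreal_mono by fastforce
  qed
  with An_fin have Fn_fin: "Fn < \<infinity>" by simp
  have "X + Ap + Fn = Fp + An"
    unfolding X_def Ap_def Fn_def Fp_def An_def
    by (simp add: nn_integral_add[symmetric] e2ennreal_diff_add_parts[OF le])
  then have "enn2ereal X + enn2ereal Ap + enn2ereal Fn = enn2ereal Fp + enn2ereal An"
    by (simp add: plus_ennreal.rep_eq[symmetric])
  moreover have "(\<integral>x. a x \<partial>M) = enn2real Ap - enn2real An"
    unfolding Ap_def An_def by (rule real_lebesgue_integral_def[OF a])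
  ultimately show ?thesis
    unfolding ext_integral_def X_def[symmetric] Fp_def[symmetric] Fn_def[symmetric]
    using Ap_fin An_fin Fn_fin
    by (cases "enn2ereal X"; cases "enn2ereal Fp")
       (auto simp: enn2ereal_eq_ereal_enn2real)
qed

lemma ext_integral_ge_integral:
  fixes a :: "'b \<Rightarrow> real"
  assumes "f \<in> borel_measurable M" "integrable M a" "\<And>x. ereal (a x) \<le> f x"
  shows "ereal (\<integral>x. a x \<partial>M) \<le> ext_integral M f"
  unfolding ext_integral_eq_integral_add_nn_integral[OF assms]
  by (simp add: add_increasing2 enn2ereal_nonneg)

lemma ext_integral_add:
  fixes a b :: "'b \<Rightarrow> real"
  assumes [measurable]: "f \<in> borel_measurable M" "g \<in> borel_measurable M"
    and a: "integrable M a" and b: "integrable M b"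
    and fa: "\<And>x. ereal (a x) \<le> f x" and gb: "\<And>x. ereal (b x) \<le> g x"
  shows "ext_integral M (\<lambda>x. f x + g x) = ext_integral M f + ext_integral M g"
proof -
  have [measurable]: "a \<in> borel_measurable M" "b \<in> borel_measurable M" using a b by auto
  have split: "e2ennreal (f x + g x - ereal (a x + b x))
      = e2ennreal (f x - ereal (a x)) + e2ennreal (g x - ereal (b x))" for x
    using fa[of x] gb[of x]
    by (cases "f x"; cases "g x") (auto simp: ennreal_plus[symmetric] simp del: ennreal_plus)
  have "ext_integral M (\<lambda>x. f x + g x) = ereal (\<integral>x. a x + b x \<partial>M)
      + enn2ereal (\<integral>\<^sup>+ x. e2ennreal (f x + g x - ereal (a x + b x)) \<partial>M)"
    using fa gb
    by (intro ext_integral_eq_integral_add_nn_integral) (auto intro: a b, metis add_mono plus_ereal.simps(1))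
  also have "\<dots> = (ereal (\<integral>x. a x \<partial>M) + enn2ereal (\<integral>\<^sup>+ x. e2ennreal (f x - ereal (a x)) \<partial>M))
      + (ereal (\<integral>x. b x \<partial>M) + enn2ereal (\<integral>\<^sup>+ x. e2ennreal (g x - ereal (b x)) \<partial>M))"
    unfolding split using a b
    by (simp add: nn_integral_add plus_ennreal.rep_eq flip: plus_ereal.simps(1)) (simp only: ac_simps)
  finally show ?thesis
    by (simp add: ext_integral_eq_integral_add_nn_integral[OF _ a fa] ext_integral_eq_integral_add_nn_integral[OF _ b gb])
qed

lemma ext_integral_distr:
  assumes "T \<in> measurable M N" "f \<in> borel_measurable N"
  shows "ext_integral (distr M N T) f = ext_integral M (\<lambda>x. f (T x))"
  unfolding ext_integral_def using assms by (simp add: nn_integral_distr)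

lemma ext_integral_infinity:
  assumes "prob_space M"
  shows "ext_integral M (\<lambda>_. \<infinity>) = \<infinity>"
  using assms unfolding ext_integral_def by (simp add: prob_space.emeasure_space_1)

lemma ext_integral_monotone_convergence:
  fixes h :: "nat \<Rightarrow> 'b \<Rightarrow> real"
  assumes h: "\<And>n. integrable M (h n)" and mono: "\<And>n x. h n x \<le> h (Suc n) x"
  shows "ext_integral M (\<lambda>x. SUP n. ereal (h n x)) = (SUP n. ereal (\<integral>x. h n x \<partial>M))"
proof -
  have [measurable]: "h n \<in> borel_measurable M" for n using h by auto
  have incseq: "incseq (\<lambda>n. h n x - h 0 x)" for x
    by (intro incseq_SucI) (simp add: mono)
  have h0: "h 0 x \<le> h n x" for n x
    using incseq_SucI[of "\<lambda>n. h n x"] mono by (auto simp: incseq_def)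
  have e2ennreal_SUP: "e2ennreal ((SUP n. ereal (h n x)) - ereal (h 0 x)) = (SUP n. ennreal (h n x - h 0 x))" for x
  proof -
    have "(SUP n. ereal (h n x)) - ereal (h 0 x) = (SUP n. ereal (h n x - h 0 x))"
      by (subst SUP_ereal_minus_left[symmetric]) auto
    also have "e2ennreal \<dots> = (SUP n. ennreal (h n x - h 0 x))"
      using sup_continuousD[OF sup_continuous_e2ennreal[OF sup_continuous_id]] incseq[of x]
      by (simp add: mono_def incseq_def image_comp)
    finally show ?thesis by simp
  qed
  have "(\<integral>\<^sup>+ x. e2ennreal ((SUP n. ereal (h n x)) - ereal (h 0 x)) \<partial>M)
      = (SUP n. \<integral>\<^sup>+ x. ennreal (h n x - h 0 x) \<partial>M)"
    unfolding e2ennreal_SUP using incseq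
    by (intro nn_integral_monotone_convergence_SUP) (auto simp: incseq_def le_fun_def intro!: ennreal_leI)
  also have "\<dots> = (SUP n. ennreal (\<integral>x. h n x - h 0 x \<partial>M))"
    using h h0 by (simp add: nn_integral_eq_integral)
  also have "enn2ereal \<dots> = (SUP n. enn2ereal (ennreal (\<integral>x. h n x - h 0 x \<partial>M)))"
    using h incseq
    by (intro sup_continuousD[OF sup_continuous_enn2ereal[OF sup_continuous_id], simplified] monoI
        ennreal_leI integral_mono) (auto simp: incseq_def)
  also have "\<dots> = (SUP n. ereal (\<integral>x. h n x - h 0 x \<partial>M))"
    using h0 by (simp add: enn2ereal_ennreal integral_nonneg)
  finally have "enn2ereal (\<integral>\<^sup>+ x. e2ennreal ((SUP n. ereal (h n x)) - ereal (h 0 x)) \<partial>M)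
      = (SUP n. ereal (\<integral>x. h n x - h 0 x \<partial>M))" .
  then have "ext_integral M (\<lambda>x. SUP n. ereal (h n x))
      = ereal (\<integral>x. h 0 x \<partial>M) + (SUP n. ereal (\<integral>x. h n x - h 0 x \<partial>M))"
    using h h0 by (subst ext_integral_eq_integral_add_nn_integral[where a="h 0"]) (auto intro: SUP_upper2)
  also have "\<dots> = (SUP n. ereal (\<integral>x. h n x \<partial>M))"
    using h by (subst SUP_ereal_add_right[symmetric]) auto
  finally show ?thesis .
qed

section \<open>Second moments and couplings\<close>

lemma P2_D:
  assumes "p \<in> P2"
  shows "prob_space p" "sets p = sets borel" "(\<integral>\<^sup>+ x. ennreal ((norm x)\<^sup>2) \<partial>p) < \<infinity>"
  using assms by (auto simp: P2_def)

lemma measurable_P2_eq: "p \<in> P2 \<Longrightarrow> measurable p N = measurable borel N"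
  by (intro measurable_cong_sets) (auto dest: P2_D)

lemma integrable_P2_norm_sq:
  fixes p :: "'a::euclidean_space measure"
  assumes "p \<in> P2"
  shows "integrable p (\<lambda>x. (norm x)\<^sup>2)"
  using P2_D[OF assms] unfolding integrable_iff_bounded by (simp add: measurable_P2_eq[OF assms])

lemma integrable_P2_norm:
  fixes p :: "'a::euclidean_space measure"
  assumes p: "p \<in> P2"
  shows "integrable p norm"
proof -
  interpret prob_space p using P2_D[OF p] by simp
  have "norm \<in> borel_measurable p"
    unfolding measurable_P2_eq[OF p] by simp
  then show ?thesis
    using integrable_P2_norm_sq[OF p] by (rule square_integrable_imp_integrable)
qed

definition affine_fn :: "'a::real_inner \<times> real \<Rightarrow> 'a \<Rightarrow> real" where
  "affine_fn c x = x \<bullet> fst c - snd c"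

lemma integrable_P2_affine_fn:
  fixes p :: "'a::euclidean_space measure"
  assumes p: "p \<in> P2"
  shows "integrable p (affine_fn c)"
proof -
  interpret prob_space p using P2_D[OF p] by simp
  have "(\<lambda>x. x) \<in> borel_measurable p"
    unfolding measurable_P2_eq[OF p] by simp
  then have "integrable p (\<lambda>x. x)"
    using integrable_P2_norm[OF p] integrable_norm_iff by auto
  then show ?thesis
    unfolding affine_fn_def by (intro Bochner_Integration.integrable_diff integrable_inner_left integrable_const)
qed

lemma Cpl_D:
  assumes "\<pi> \<in> Cpl p q"
  shows "prob_space \<pi>" "sets \<pi> = sets (borel \<Otimes>\<^sub>M borel)" "distr \<pi> borel fst = p" "distr \<pi> borel snd = q"
  using assms by (auto simp: Cpl_def)

lemma measurable_Cpl_eq: "\<pi> \<in> Cpl p q \<Longrightarrow> measurable \<pi> N = measurable (borel \<Otimes>\<^sub>M borel) N"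
  by (intro measurable_cong_sets) (auto dest: Cpl_D)

lemma
  fixes f :: "'a::euclidean_space \<Rightarrow> real"
  assumes \<pi>: "\<pi> \<in> Cpl p q" and p: "p \<in> P2" and f: "integrable p f"
  shows integrable_Cpl_fst: "integrable \<pi> (\<lambda>w. f (fst w))"
    and integral_Cpl_fst: "(\<integral>w. f (fst w) \<partial>\<pi>) = (\<integral>x. f x \<partial>p)"
proof -
  have m: "fst \<in> measurable \<pi> borel" "f \<in> borel_measurable borel"
    using f by (auto simp: measurable_Cpl_eq[OF \<pi>] measurable_P2_eq[OF p])
  show "integrable \<pi> (\<lambda>w. f (fst w))" "(\<integral>w. f (fst w) \<partial>\<pi>) = (\<integral>x. f x \<partial>p)"
    using f Cpl_D(3)[OF \<pi>] integrable_distr_eq[OF m] integral_distr[OF m] by simp_all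
qed

lemma
  fixes g :: "'a::euclidean_space \<Rightarrow> real"
  assumes \<pi>: "\<pi> \<in> Cpl p q" and q: "q \<in> P2" and g: "integrable q g"
  shows integrable_Cpl_snd: "integrable \<pi> (\<lambda>w. g (snd w))"
    and integral_Cpl_snd: "(\<integral>w. g (snd w) \<partial>\<pi>) = (\<integral>x. g x \<partial>q)"
proof -
  have m: "snd \<in> measurable \<pi> borel" "g \<in> borel_measurable borel"
    using g by (auto simp: measurable_Cpl_eq[OF \<pi>] measurable_P2_eq[OF q])
  show "integrable \<pi> (\<lambda>w. g (snd w))" "(\<integral>w. g (snd w) \<partial>\<pi>) = (\<integral>x. g x \<partial>q)"
    using g Cpl_D(4)[OF \<pi>] integrable_distr_eq[OF m] integral_distr[OF m] by simp_all
qed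

lemma inner_le_half_sum_squares: "\<bar>x \<bullet> y\<bar> \<le> ((norm x)\<^sup>2 + (norm y)\<^sup>2) / 2"
  for x y :: "'a::real_inner"
  using Cauchy_Schwarz_ineq2[of x y] sum_squares_bound[of "norm x" "norm y"]
  by (simp add: power2_eq_square)

lemma
  fixes \<pi> :: "('a::euclidean_space \<times> 'a) measure"
  assumes \<pi>: "\<pi> \<in> Cpl p q" and p: "p \<in> P2" and q: "q \<in> P2"
  shows integrable_Cpl_inner: "integrable \<pi> (\<lambda>w. fst w \<bullet> snd w)"
    and integral_Cpl_inner_le:
      "(\<integral>w. fst w \<bullet> snd w \<partial>\<pi>) \<le> ((\<integral>x. (norm x)\<^sup>2 \<partial>p) + (\<integral>x. (norm x)\<^sup>2 \<partial>q)) / 2"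
proof -
  note fst_sq = integrable_Cpl_fst[OF \<pi> p integrable_P2_norm_sq[OF p]]
    and snd_sq = integrable_Cpl_snd[OF \<pi> q integrable_P2_norm_sq[OF q]]
  then have sq: "integrable \<pi> (\<lambda>w. ((norm (fst w))\<^sup>2 + (norm (snd w))\<^sup>2) / 2)"
    by simp
  have bound: "norm (fst w \<bullet> snd w) \<le> norm (((norm (fst w))\<^sup>2 + (norm (snd w))\<^sup>2) / 2)" for w
    using inner_le_half_sum_squares[of "fst w" "snd w"] by simp
  have "(\<lambda>w. fst w \<bullet> snd w) \<in> borel_measurable \<pi>"
    unfolding measurable_Cpl_eq[OF \<pi>] by measurable
  then show int: "integrable \<pi> (\<lambda>w. fst w \<bullet> snd w)"
    by (rule Bochner_Integration.integrable_bound[OF sq _ AE_I2[OF bound]])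
  have "(\<integral>w. fst w \<bullet> snd w \<partial>\<pi>) \<le> (\<integral>w. ((norm (fst w))\<^sup>2 + (norm (snd w))\<^sup>2) / 2 \<partial>\<pi>)"
    by (rule integral_mono[OF int sq abs_le_D1[OF inner_le_half_sum_squares]])
  also have "\<dots> = ((\<integral>x. (norm x)\<^sup>2 \<partial>p) + (\<integral>x. (norm x)\<^sup>2 \<partial>q)) / 2"
    by (simp only: integral_divide_zero Bochner_Integration.integral_add[OF fst_sq snd_sq]
        integral_Cpl_fst[OF \<pi> p integrable_P2_norm_sq[OF p]]
        integral_Cpl_snd[OF \<pi> q integrable_P2_norm_sq[OF q]])
  finally show "(\<integral>w. fst w \<bullet> snd w \<partial>\<pi>) \<le> ((\<integral>x. (norm x)\<^sup>2 \<partial>p) + (\<integral>x. (norm x)\<^sup>2 \<partial>q)) / 2" .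
qed

lemma MCov_le_second_moments:
  fixes p q :: "'a::euclidean_space measure"
  assumes "p \<in> P2" "q \<in> P2"
  shows "MCov p q \<le> ereal (((\<integral>x. (norm x)\<^sup>2 \<partial>p) + (\<integral>x. (norm x)\<^sup>2 \<partial>q)) / 2)"
  unfolding MCov_def by (rule SUP_least) (simp only: ereal_less_eq integral_Cpl_inner_le[OF _ assms])

lemma integral_inner_le_MCov_distr:
  fixes q :: "'a::euclidean_space measure"
  assumes "prob_space q" "sets q = sets borel" and T: "T \<in> borel_measurable borel"
  shows "ereal (\<integral>z. T z \<bullet> z \<partial>q) \<le> MCov (distr q borel T) q"
proof -
  have "T \<in> measurable q borel" "(\<lambda>z. z) \<in> measurable q borel"
    using T assms(2) by (simp_all add: measurable_cong_sets[OF assms(2) refl])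
  then have graph: "(\<lambda>z. (T z, z)) \<in> measurable q (borel \<Otimes>\<^sub>M borel)"
    by (rule measurable_Pair)
  define \<pi> where "\<pi> = distr q (borel \<Otimes>\<^sub>M borel) (\<lambda>z. (T z, z))"
  have "distr q borel (\<lambda>z. z) = q"
    using assms(2) by (intro distr_id2) simp
  then have cpl: "\<pi> \<in> Cpl (distr q borel T) q"
    unfolding Cpl_def \<pi>_def using graph assms(1)
    by (simp add: distr_distr comp_def prob_space.prob_space_distr)
  have "(\<integral>w. fst w \<bullet> snd w \<partial>\<pi>) = (\<integral>z. T z \<bullet> z \<partial>q)"
    unfolding \<pi>_def by (subst integral_distr[OF graph]) simp_all
  moreover have "ereal (\<integral>w. fst w \<bullet> snd w \<partial>\<pi>) \<le> MCov (distr q borel T) q"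
    unfolding MCov_def by (rule SUP_upper[OF cpl])
  ultimately show ?thesis by simp
qed

section \<open>Convex conjugates\<close>

definition real_graph :: "('a \<Rightarrow> ereal) \<Rightarrow> ('a \<times> real) set" where
  "real_graph \<psi> = {(y, r). \<psi> y = ereal r}"

lemma mem_real_graph_iff: "c \<in> real_graph \<psi> \<longleftrightarrow> \<psi> (fst c) = ereal (snd c)"
  by (cases c) (simp add: real_graph_def)

lemma affine_fn_le_conjugate:
  assumes "c \<in> real_graph \<psi>"
  shows "ereal (affine_fn c x) \<le> conjugate \<psi> x"
proof -
  obtain y r where c: "c = (y, r)" "\<psi> y = ereal r"
    using assms by (auto simp: real_graph_def)
  then have "ereal (affine_fn c x) = ereal (x \<bullet> y) - \<psi> y"
    by (simp add: affine_fn_def)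
  also have "\<dots> \<le> conjugate \<psi> x"
    unfolding conjugate_def by (rule SUP_upper) simp
  finally show ?thesis .
qed

lemma conjugate_eq_SUP_real_graph:
  assumes "\<And>y. \<psi> y \<noteq> -\<infinity>"
  shows "conjugate \<psi> x = (SUP c\<in>real_graph \<psi>. ereal (affine_fn c x))"
proof (rule antisym)
  show "conjugate \<psi> x \<le> (SUP c\<in>real_graph \<psi>. ereal (affine_fn c x))"
    unfolding conjugate_def
  proof (rule SUP_least)
    fix y
    show "ereal (x \<bullet> y) - \<psi> y \<le> (SUP c\<in>real_graph \<psi>. ereal (affine_fn c x))"
    proof (cases "\<psi> y")
      case (real r)
      then have "(y, r) \<in> real_graph \<psi>" by (simp add: real_graph_def)
      then have "ereal (affine_fn (y, r) x) \<le> (SUP c\<in>real_graph \<psi>. ereal (affine_fn c x))"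
        by (rule SUP_upper)
      then show ?thesis using real by (simp add: affine_fn_def)
    qed (use assms in auto)
  qed
  show "(SUP c\<in>real_graph \<psi>. ereal (affine_fn c x)) \<le> conjugate \<psi> x"
    by (rule SUP_least) (rule affine_fn_le_conjugate)
qed

lemma SUP_eq_SUP_dense:
  fixes f :: "'a::metric_space \<Rightarrow> real"
  assumes "D \<subseteq> S" "S \<subseteq> closure D" "continuous_on S f"
  shows "(SUP x\<in>S. ereal (f x)) = (SUP x\<in>D. ereal (f x))"
proof (rule antisym)
  show "(SUP x\<in>S. ereal (f x)) \<le> (SUP x\<in>D. ereal (f x))"
  proof (rule SUP_least)
    fix x assume "x \<in> S"
    with assms(2) have "x \<in> closure D" by auto
    then obtain d where d: "\<And>n. d n \<in> D" "d \<longlonglongrightarrow> x"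
      unfolding closure_sequential by blast
    have "(\<lambda>n. f (d n)) \<longlonglongrightarrow> f x"
      using d assms(1) by (intro continuous_on_tendsto_compose[OF assms(3) d(2) \<open>x \<in> S\<close>] always_eventually) auto
    then have "(\<lambda>n. ereal (f (d n))) \<longlonglongrightarrow> ereal (f x)"
      by simp
    then show "ereal (f x) \<le> (SUP x\<in>D. ereal (f x))"
      by (rule LIMSEQ_le_const2) (use d(1) in \<open>auto intro!: exI[of _ 0] SUP_upper\<close>)
  qed
  show "(SUP x\<in>D. ereal (f x)) \<le> (SUP x\<in>S. ereal (f x))"
    using assms(1) by (rule SUP_subset_mono) simp
qed

lemma conjugate_eq_SUP_seq:
  fixes \<psi> :: "'a::euclidean_space \<Rightarrow> ereal"
  assumes "\<And>y. \<psi> y \<noteq> -\<infinity>" and "real_graph \<psi> \<noteq> {}"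
  obtains e :: "nat \<Rightarrow> 'a \<times> real" where "\<And>n. e n \<in> real_graph \<psi>" "\<And>x. conjugate \<psi> x = (SUP n. ereal (affine_fn (e n) x))"
proof -
  obtain D where D: "countable D" "D \<subseteq> real_graph \<psi>" "real_graph \<psi> \<subseteq> closure D"
    by (rule separable)
  then have "D \<noteq> {}" using assms(2) by auto
  define e where "e = from_nat_into D"
  have "range e = D"
    unfolding e_def using \<open>D \<noteq> {}\<close> D(1) by (rule range_from_nat_into)
  have cont: "continuous_on (real_graph \<psi>) (\<lambda>c. affine_fn c x)" for x
    unfolding affine_fn_def by (intro continuous_intros)
  have eq: "conjugate \<psi> x = (SUP n. ereal (affine_fn (e n) x))" for x
    unfolding conjugate_eq_SUP_real_graph[OF assms(1)] SUP_eq_SUP_dense[OF D(2,3) cont]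
    unfolding \<open>range e = D\<close>[symmetric] by (simp add: image_comp)
  have mem: "e n \<in> real_graph \<psi>" for n
    using \<open>range e = D\<close> D(2) by auto
  show ?thesis by (rule that[OF mem eq])
qed

lemma borel_measurable_conjugate [measurable]:
  fixes \<psi> :: "'a::euclidean_space \<Rightarrow> ereal"
  assumes "\<And>y. \<psi> y \<noteq> -\<infinity>"
  shows "conjugate \<psi> \<in> borel_measurable borel"
proof (cases "real_graph \<psi> = {}")
  case True
  then have "conjugate \<psi> = (\<lambda>_. -\<infinity>)"
    by (simp add: fun_eq_iff conjugate_eq_SUP_real_graph[OF assms] bot_ereal_def)
  then show ?thesis by simp
next
  case False
  then obtain e :: "nat \<Rightarrow> 'a \<times> real"
    where "\<And>x. conjugate \<psi> x = (SUP n. ereal (affine_fn (e n) x))"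
    using conjugate_eq_SUP_seq[OF assms False] by blast
  then have conj_eq: "conjugate \<psi> = (\<lambda>x. SUP n. ereal (affine_fn (e n) x))"
    by (rule ext)
  show ?thesis unfolding conj_eq affine_fn_def by measurable
qed

lemma fenchel_young: "ereal (x \<bullet> y) \<le> conjugate \<psi> x + \<psi> y"
proof -
  have "ereal (x \<bullet> y) - \<psi> y \<le> conjugate \<psi> x"
    unfolding conjugate_def by (rule SUP_upper) simp
  then show ?thesis
    by (cases "\<psi> y"; cases "conjugate \<psi> x") simp_all
qed

lemma conjugate_conjugate_le: "conjugate (conjugate \<psi>) y \<le> \<psi> y"
  unfolding conjugate_def[of "conjugate \<psi>"]
proof (rule SUP_least)
  fix x
  have FY: "ereal (y \<bullet> x) \<le> conjugate \<psi> x + \<psi> y"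
    using fenchel_young[of x y \<psi>] by (simp add: inner_commute)
  show "ereal (y \<bullet> x) - conjugate \<psi> x \<le> \<psi> y"
  proof (cases "conjugate \<psi> x")
    case (real c)
    with FY show ?thesis by (cases "\<psi> y") simp_all
  next
    case MInf
    with FY show ?thesis by (cases "\<psi> y") simp_all
  qed simp
qed

section \<open>Duality\<close>

primrec running_argmax :: "(nat \<Rightarrow> 'a::real_inner \<times> real) \<Rightarrow> nat \<Rightarrow> 'a \<Rightarrow> 'a \<times> real" where
  "running_argmax e 0 x = e 0"
| "running_argmax e (Suc n) x =
    (if affine_fn (running_argmax e n x) x < affine_fn (e (Suc n)) x then e (Suc n) else running_argmax e n x)"

lemma running_argmax_mem: "running_argmax e n x \<in> e ` {..n}"
  by (induction n) auto

lemma affine_fn_le_running_argmax: "k \<le> n \<Longrightarrow> affine_fn (e k) x \<le> affine_fn (running_argmax e n x) x"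
proof (induction n)
  case (Suc n)
  then show ?case by (cases "k = Suc n") (auto simp: le_Suc_eq)
qed simp

lemma running_argmax_mono: "affine_fn (running_argmax e n x) x \<le> affine_fn (running_argmax e (Suc n) x) x"
  by simp

lemma SUP_running_argmax:
  "(SUP n. ereal (affine_fn (running_argmax e n x) x)) = (SUP n. ereal (affine_fn (e n) x))"
proof (rule antisym)
  show "(SUP n. ereal (affine_fn (running_argmax e n x) x)) \<le> (SUP n. ereal (affine_fn (e n) x))"
  proof (rule SUP_least)
    fix n
    obtain k where "running_argmax e n x = e k"
      using running_argmax_mem[of e n x] by auto
    then show "ereal (affine_fn (running_argmax e n x) x) \<le> (SUP n. ereal (affine_fn (e n) x))"
      by (auto intro: SUP_upper)
  qed
  show "(SUP n. ereal (affine_fn (e n) x)) \<le> (SUP n. ereal (affine_fn (running_argmax e n x) x))"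
  proof (rule SUP_mono)
    fix n
    show "\<exists>m\<in>UNIV. ereal (affine_fn (e n) x) \<le> ereal (affine_fn (running_argmax e m x) x)"
      using affine_fn_le_running_argmax[of n n e x] by auto
  qed
qed

lemma borel_measurable_running_argmax [measurable]:
  fixes e :: "nat \<Rightarrow> 'a::euclidean_space \<times> real"
  shows "(\<lambda>x. fst (running_argmax e n x)) \<in> borel_measurable borel"
    and "(\<lambda>x. snd (running_argmax e n x)) \<in> borel_measurable borel"
proof (induction n)
  case (Suc n)
  note [measurable] = Suc.IH
  show "(\<lambda>x. fst (running_argmax e (Suc n) x)) \<in> borel_measurable borel"
    "(\<lambda>x. snd (running_argmax e (Suc n) x)) \<in> borel_measurable borel"
    unfolding running_argmax.simps if_distrib[of fst] if_distrib[of snd] affine_fn_def by measurable measurable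
qed (simp_all only: running_argmax.simps measurable_const space_borel UNIV_I)

lemma distr_finite_range_in_P2:
  fixes T :: "'a::euclidean_space \<Rightarrow> 'a"
  assumes q: "prob_space q" "sets q = sets borel"
    and T: "T \<in> borel_measurable borel" "finite (range T)"
  shows "distr q borel T \<in> P2"
proof -
  interpret prob_space q by (fact q(1))
  have Tq: "T \<in> measurable q borel"
    using T(1) by (simp add: measurable_cong_sets[OF q(2) refl])
  define K where "K = (\<Sum>y\<in>range T. (norm y)\<^sup>2)"
  have "(norm (T z))\<^sup>2 \<le> K" for z
    unfolding K_def using T(2) by (intro member_le_sum) auto
  then have "(\<integral>\<^sup>+ z. ennreal ((norm (T z))\<^sup>2) \<partial>q) \<le> (\<integral>\<^sup>+ z. ennreal K \<partial>q)"
    by (intro nn_integral_mono ennreal_leI)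
  then have "(\<integral>\<^sup>+ x. ennreal ((norm x)\<^sup>2) \<partial>distr q borel T) \<le> (\<integral>\<^sup>+ z. ennreal K \<partial>q)"
    by (simp add: nn_integral_distr[OF Tq])
  also have "\<dots> < \<infinity>"
    by (simp add: emeasure_space_1)
  finally show ?thesis
    unfolding P2_def using prob_space_distr[OF Tq] by simp
qed

lemma
  fixes T :: "'a::euclidean_space \<Rightarrow> 'a" and \<psi> :: "'a \<Rightarrow> ereal"
  assumes q: "prob_space q" "sets q = sets borel"
    and T: "T \<in> borel_measurable borel" "finite (range T)"
    and fin: "\<And>z. \<bar>\<psi> (T z)\<bar> \<noteq> \<infinity>"
  shows integrable_finite_range_comp: "integrable q (\<lambda>z. real_of_ereal (\<psi> (T z)))"
    and ext_integral_distr_finite_range: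
      "ext_integral (distr q borel T) \<psi> = ereal (\<integral>z. real_of_ereal (\<psi> (T z)) \<partial>q)"
proof -
  interpret prob_space q by (fact q(1))
  have Tq: "T \<in> measurable q borel"
    using T(1) by (simp add: measurable_cong_sets[OF q(2) refl])
  interpret D: prob_space "distr q borel T" by (rule prob_space_distr[OF Tq])
  define c where "c y = (\<Sum>y'\<in>range T. real_of_ereal (\<psi> y') * indicator {y'} y)" for y
  have c_meas [measurable]: "c \<in> borel_measurable borel"
    unfolding c_def by measurable
  have c_eq: "c y = real_of_ereal (\<psi> y)" if "y \<in> range T" for y
    unfolding c_def using T(2) that by (simp add: indicator_def sum.If_cases Int_absorb1)
  have "\<bar>c y\<bar> \<le> (\<Sum>y'\<in>range T. \<bar>real_of_ereal (\<psi> y')\<bar>)" for y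
    unfolding c_def by (intro order_trans[OF sum_abs] sum_mono) (simp add: indicator_def abs_mult real_of_ereal_pos)
  then have c_int: "integrable (distr q borel T) c"
    by (intro D.integrable_const_bound[where B="\<Sum>y'\<in>range T. \<bar>real_of_ereal (\<psi> y')\<bar>"]) simp_all
  have comp: "c (T z) = real_of_ereal (\<psi> (T z))" for z
    by (rule c_eq) simp
  show "integrable q (\<lambda>z. real_of_ereal (\<psi> (T z)))"
    using c_int integrable_distr_eq[OF Tq c_meas] by (simp add: comp)
  have \<psi>_eq: "\<psi> y = ereal (c y)" if y: "y \<in> range T" for y
  proof -
    obtain z where "y = T z" using y by auto
    then show ?thesis using c_eq[OF y] fin[of z] by (cases "\<psi> y") auto
  qed
  have "AE y in distr q borel T. y \<in> range T"
    using T(2) by (subst AE_distr_iff[OF Tq]) (auto intro: borel_closed finite_imp_closed)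
  then have "AE y in distr q borel T. \<psi> y = ereal (c y)"
    by eventually_elim (rule \<psi>_eq)
  then have "ext_integral (distr q borel T) \<psi> = ereal (\<integral>y. c y \<partial>distr q borel T)"
    by (rule ext_integral_eq_integral[OF _ c_int])
  then show "ext_integral (distr q borel T) \<psi> = ereal (\<integral>z. real_of_ereal (\<psi> (T z)) \<partial>q)"
    by (simp add: integral_distr[OF Tq c_meas] comp)
qed

lemma integrable_inner_finite_range:
  fixes T :: "'a::euclidean_space \<Rightarrow> 'a"
  assumes q: "q \<in> P2" and T: "T \<in> borel_measurable borel" "finite (range T)"
  shows "integrable q (\<lambda>z. z \<bullet> T z)"
proof -
  define K where "K = (\<Sum>y\<in>range T. norm y)"
  have bound: "norm (z \<bullet> T z) \<le> norm (K * norm z)" for z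
  proof -
    have "norm (T z) \<le> K"
      unfolding K_def using T(2) by (intro member_le_sum) auto
    have "\<bar>z \<bullet> T z\<bar> \<le> norm z * norm (T z)"
      by (rule Cauchy_Schwarz_ineq2)
    also have "\<dots> \<le> norm z * K"
      using \<open>norm (T z) \<le> K\<close> by (rule mult_left_mono) simp
    also have "\<dots> \<le> norm (K * norm z)"
      by (simp add: mult.commute)
    finally show ?thesis by simp
  qed
  have [measurable]: "T \<in> borel_measurable borel" by (fact T(1))
  have "(\<lambda>z. z \<bullet> T z) \<in> borel_measurable q"
    unfolding measurable_P2_eq[OF q] by measurable
  moreover have "integrable q (\<lambda>z. K * norm z)"
    using integrable_P2_norm[OF q] by (rule integrable_mult_right)
  ultimately show ?thesis
    by (intro Bochner_Integration.integrable_bound[OF _ _ AE_I2[OF bound]])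
qed

lemma integral_le_MCov_minus_ext_integral_distr:
  fixes T :: "'a::euclidean_space \<Rightarrow> 'a" and \<psi> :: "'a \<Rightarrow> ereal"
  assumes q: "q \<in> P2" and T: "T \<in> borel_measurable borel" "finite (range T)"
    and fin: "\<And>z. \<bar>\<psi> (T z)\<bar> \<noteq> \<infinity>"
  shows "ereal (\<integral>z. z \<bullet> T z - real_of_ereal (\<psi> (T z)) \<partial>q)
    \<le> MCov (distr q borel T) q - ext_integral (distr q borel T) \<psi>"
proof -
  note q' = P2_D(1,2)[OF q]
  have "ereal (\<integral>z. z \<bullet> T z - real_of_ereal (\<psi> (T z)) \<partial>q)
      = ereal (\<integral>z. T z \<bullet> z \<partial>q) - ereal (\<integral>z. real_of_ereal (\<psi> (T z)) \<partial>q)"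
    using integrable_inner_finite_range[OF q T] integrable_finite_range_comp[of q T \<psi>, OF q' T fin]
    by (simp add: inner_commute)
  also have "\<dots> \<le> MCov (distr q borel T) q - ext_integral (distr q borel T) \<psi>"
    unfolding ext_integral_distr_finite_range[of q T \<psi>, OF q' T fin]
    by (intro ereal_minus_mono integral_inner_le_MCov_distr[OF q' T(1)] order_refl)
  finally show ?thesis .
qed

lemma MCov_le_ext_integral_add:
  fixes p q :: "'a::euclidean_space measure" and g \<phi> :: "'a \<Rightarrow> ereal" and a b :: "'a \<Rightarrow> real"
  assumes p: "p \<in> P2" and q: "q \<in> P2"
    and [measurable]: "g \<in> borel_measurable borel" "\<phi> \<in> borel_measurable borel"
    and a: "integrable p a" "\<And>y. ereal (a y) \<le> g y"
    and b: "integrable q b" "\<And>z. ereal (b z) \<le> \<phi> z"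
    and young: "\<And>y z. ereal (y \<bullet> z) \<le> g y + \<phi> z"
  shows "MCov p q \<le> ext_integral p g + ext_integral q \<phi>"
  unfolding MCov_def
proof (rule SUP_least)
  fix \<pi> assume \<pi>: "\<pi> \<in> Cpl p q"
  have fst: "fst \<in> measurable \<pi> borel" and snd: "snd \<in> measurable \<pi> borel"
    by (simp_all add: measurable_Cpl_eq[OF \<pi>])
  have "ereal (\<integral>w. fst w \<bullet> snd w \<partial>\<pi>) = ext_integral \<pi> (\<lambda>w. ereal (fst w \<bullet> snd w))"
    by (rule ext_integral_eq_integral[symmetric]) (simp_all add: integrable_Cpl_inner[OF \<pi> p q])
  also have "\<dots> \<le> ext_integral \<pi> (\<lambda>w. g (fst w) + \<phi> (snd w))"
    by (rule ext_integral_mono) (rule young)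
  also have "\<dots> = ext_integral \<pi> (\<lambda>w. g (fst w)) + ext_integral \<pi> (\<lambda>w. \<phi> (snd w))"
    by (rule ext_integral_add[OF _ _ integrable_Cpl_fst[OF \<pi> p a(1)] integrable_Cpl_snd[OF \<pi> q b(1)]])
      (simp_all add: measurable_Cpl_eq[OF \<pi>] a(2) b(2))
  also have "\<dots> = ext_integral p g + ext_integral q \<phi>"
    using ext_integral_distr[OF fst, of g] ext_integral_distr[OF snd, of \<phi>] Cpl_D(3,4)[OF \<pi>] by simp
  finally show "ereal (\<integral>w. fst w \<bullet> snd w \<partial>\<pi>) \<le> ext_integral p g + ext_integral q \<phi>" .
qed

lemma conjugate_neq_MInf: "c \<in> real_graph \<psi> \<Longrightarrow> conjugate \<psi> x \<noteq> -\<infinity>"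
  using affine_fn_le_conjugate[of c \<psi> x] by auto

lemma real_graph_conjugate_nonempty:
  assumes "prob_space M" "ext_integral M (conjugate \<psi>) \<noteq> \<infinity>" and c: "c \<in> real_graph \<psi>"
  shows "real_graph (conjugate \<psi>) \<noteq> {}"
proof -
  have "conjugate \<psi> \<noteq> (\<lambda>_. \<infinity>)"
    using assms(2) ext_integral_infinity[OF assms(1)] by auto
  then obtain z where "conjugate \<psi> z \<noteq> \<infinity>"
    by auto
  with conjugate_neq_MInf[OF c, of z] obtain s where "conjugate \<psi> z = ereal s"
    by (cases "conjugate \<psi> z") auto
  then show ?thesis
    by (auto simp: real_graph_def)
qed

lemma MCov_minus_ext_integral_le_conjugate:
  fixes p q :: "'a::euclidean_space measure" and \<psi> :: "'a \<Rightarrow> ereal"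
  assumes p: "p \<in> P2" and q: "q \<in> P2"
    and no_MInf: "\<And>y. \<psi> y \<noteq> -\<infinity>" and c: "c \<in> real_graph \<psi>"
  shows "MCov p q - ext_integral p \<psi> \<le> ext_integral q (conjugate \<psi>)"
proof (cases "ext_integral q (conjugate \<psi>) = \<infinity>")
  case False
  define \<phi> where "\<phi> = conjugate \<psi>"
  have \<phi>_lower: "ereal (affine_fn c z) \<le> \<phi> z" for z
    unfolding \<phi>_def by (rule affine_fn_le_conjugate[OF c])
  obtain d where d: "d \<in> real_graph \<phi>"
    using real_graph_conjugate_nonempty[OF P2_D(1)[OF q] False c] unfolding \<phi>_def by blast
  define g where "g = conjugate \<phi>"
  have g_meas: "g \<in> borel_measurable borel" and \<phi>_meas: "\<phi> \<in> borel_measurable borel"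
    unfolding g_def \<phi>_def using conjugate_neq_MInf[OF c] no_MInf
    by (simp_all add: borel_measurable_conjugate)
  have g_lower: "ereal (affine_fn d y) \<le> g y" for y
    unfolding g_def by (rule affine_fn_le_conjugate[OF d])
  have "MCov p q \<le> ext_integral p g + ext_integral q \<phi>"
  proof (rule MCov_le_ext_integral_add[OF p q g_meas \<phi>_meas integrable_P2_affine_fn[OF p] g_lower
        integrable_P2_affine_fn[OF q] \<phi>_lower])
    show "ereal (y \<bullet> z) \<le> g y + \<phi> z" for y z
      using fenchel_young[of y z \<phi>] by (simp add: g_def inner_commute add.commute)
  qed
  moreover have "ext_integral p g \<le> ext_integral p \<psi>"
    unfolding g_def \<phi>_def by (rule ext_integral_mono) (rule conjugate_conjugate_le)
  moreover have "MCov p q < \<infinity>"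
    by (rule le_less_trans[OF MCov_le_second_moments[OF p q]]) simp
  moreover have "ext_integral p g \<noteq> -\<infinity>"
    using ext_integral_ge_integral[OF _ integrable_P2_affine_fn[OF p] g_lower] g_meas
    by (auto simp: measurable_P2_eq[OF p])
  moreover have "ext_integral q \<phi> \<noteq> -\<infinity>"
    using ext_integral_ge_integral[OF _ integrable_P2_affine_fn[OF q] \<phi>_lower] \<phi>_meas
    by (auto simp: measurable_P2_eq[OF q])
  ultimately show ?thesis
    using False unfolding \<phi>_def[symmetric] ereal_minus_le_iff
    by (auto simp: add.commute intro: order_trans add_right_mono)
qed simp

lemma
  fixes q :: "'a::euclidean_space measure" and \<psi> :: "'a \<Rightarrow> ereal"
  assumes q: "q \<in> P2" and e: "\<And>n. e n \<in> real_graph \<psi>"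
  shows integrable_running_argmax: "integrable q (\<lambda>z. affine_fn (running_argmax e n z) z)"
    and integral_running_argmax_le_SUP_MCov:
      "ereal (\<integral>z. affine_fn (running_argmax e n z) z \<partial>q) \<le> (SUP p\<in>P2. MCov p q - ext_integral p \<psi>)"
proof -
  define T where "T z = fst (running_argmax e n z)" for z
  have T_meas: "T \<in> borel_measurable borel"
    unfolding T_def[abs_def] by measurable
  have "T z \<in> fst ` e ` {..n}" for z
    unfolding T_def by (rule imageI[OF running_argmax_mem])
  then have "range T \<subseteq> fst ` e ` {..n}"
    by auto
  then have T_range: "finite (range T)"
    by (rule finite_subset) simp
  have "running_argmax e n z \<in> real_graph \<psi>" for z
    using running_argmax_mem[of e n z] e by auto
  then have \<psi>_T: "\<psi> (T z) = ereal (snd (running_argmax e n z))" for z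
    by (simp add: T_def mem_real_graph_iff)
  then have fin: "\<bar>\<psi> (T z)\<bar> \<noteq> \<infinity>" for z
    by simp
  have eq: "affine_fn (running_argmax e n z) z = z \<bullet> T z - real_of_ereal (\<psi> (T z))" for z
    unfolding affine_fn_def \<psi>_T by (simp add: T_def)
  show "integrable q (\<lambda>z. affine_fn (running_argmax e n z) z)"
    unfolding eq using integrable_inner_finite_range[OF q T_meas T_range]
      integrable_finite_range_comp[of q T \<psi>, OF P2_D(1,2)[OF q] T_meas T_range fin]
    by simp
  have "ereal (\<integral>z. affine_fn (running_argmax e n z) z \<partial>q)
      \<le> MCov (distr q borel T) q - ext_integral (distr q borel T) \<psi>"
    unfolding eq by (rule integral_le_MCov_minus_ext_integral_distr[where \<psi>=\<psi>, OF q T_meas T_range fin])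
  also have "\<dots> \<le> (SUP p\<in>P2. MCov p q - ext_integral p \<psi>)"
    by (rule SUP_upper[OF distr_finite_range_in_P2[OF P2_D(1,2)[OF q] T_meas T_range]])
  finally show "ereal (\<integral>z. affine_fn (running_argmax e n z) z \<partial>q)
      \<le> (SUP p\<in>P2. MCov p q - ext_integral p \<psi>)" .
qed

lemma ext_integral_conjugate_le_SUP_MCov:
  fixes q :: "'a::euclidean_space measure" and \<psi> :: "'a \<Rightarrow> ereal"
  assumes q: "q \<in> P2" and no_MInf: "\<And>y. \<psi> y \<noteq> -\<infinity>" and graph: "real_graph \<psi> \<noteq> {}"
  shows "ext_integral q (conjugate \<psi>) \<le> (SUP p\<in>P2. MCov p q - ext_integral p \<psi>)"
proof -
  obtain e :: "nat \<Rightarrow> 'a \<times> real" where e: "\<And>n. e n \<in> real_graph \<psi>"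
    and conj: "\<And>z. conjugate \<psi> z = (SUP n. ereal (affine_fn (e n) z))"
    using conjugate_eq_SUP_seq[of \<psi>, OF no_MInf graph] by blast
  define h where "h n z = affine_fn (running_argmax e n z) z" for n z
  have h_int: "integrable q (h n)" for n
    unfolding h_def by (rule integrable_running_argmax[OF q e])
  have h_mono: "h n z \<le> h (Suc n) z" for n z
    unfolding h_def by (rule running_argmax_mono)
  have "ext_integral q (conjugate \<psi>) = ext_integral q (\<lambda>z. SUP n. ereal (h n z))"
    unfolding conj h_def SUP_running_argmax ..
  also have "\<dots> = (SUP n. ereal (\<integral>z. h n z \<partial>q))"
    by (rule ext_integral_monotone_convergence[where h=h, OF h_int h_mono])
  also have "\<dots> \<le> (SUP p\<in>P2. MCov p q - ext_integral p \<psi>)"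
    unfolding h_def by (rule SUP_least) (rule integral_running_argmax_le_SUP_MCov[OF q e])
  finally show ?thesis .
qed

theorem SUP_MCov_minus_ext_integral_eq:
  fixes q :: "'a::euclidean_space measure" and \<psi> :: "'a \<Rightarrow> ereal"
  assumes q: "q \<in> P2" and no_MInf: "\<And>y. \<psi> y \<noteq> -\<infinity>" and proper: "\<exists>y. \<psi> y < \<infinity>"
  shows "(SUP p\<in>P2. MCov p q - ext_integral p \<psi>) = ext_integral q (conjugate \<psi>)"
proof -
  obtain y where "\<psi> y < \<infinity>" using proper by blast
  with no_MInf[of y] obtain r where "(y, r) \<in> real_graph \<psi>"
    by (cases "\<psi> y") (auto simp: real_graph_def)
  then have graph: "real_graph \<psi> \<noteq> {}" by blast
  show ?thesis
  proof (rule antisym)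
    show "(SUP p\<in>P2. MCov p q - ext_integral p \<psi>) \<le> ext_integral q (conjugate \<psi>)"
      by (rule SUP_least) (rule MCov_minus_ext_integral_le_conjugate[where \<psi>=\<psi>, OF _ q no_MInf \<open>(y, r) \<in> real_graph \<psi>\<close>])
    show "ext_integral q (conjugate \<psi>) \<le> (SUP p\<in>P2. MCov p q - ext_integral p \<psi>)"
      by (rule ext_integral_conjugate_le_SUP_MCov[where \<psi>=\<psi>, OF q no_MInf graph])
  qed
qed

theorem lemma2p6:
  fixes q :: "'a::euclidean_space measure" and \<psi> :: "'a \<Rightarrow> ereal"
  assumes "q \<in> P2"
    and "no_mass_small_sets q"
    and "proper_convex \<psi>"
  shows "(SUP p\<in>P2. MCov p q - ext_integral p \<psi>) = ext_integral q (conjugate \<psi>)"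
proof -
  have "\<And>y. \<psi> y \<noteq> -\<infinity>" "\<exists>y. \<psi> y < \<infinity>"
    using assms(3) by (auto simp: proper_convex_def)
  then show ?thesis by (rule SUP_MCov_minus_ext_integral_eq[OF assms(1)])
qed

end
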